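(* Let $X,Y,Z$ be finite random variables forming a Markov chain $X\leftrightarrow Y\leftrightarrow Z$, let $K_1$ be the Gács–Körner common information of $(X,Y)$ and $K_2$ the Gács–Körner common information of $(X,Z)$. Then $H(K_2\mid K_1)=0$ and $H(K_2)\le H(K_1)$.
   Context: For finite random variables $X,Y$ with (w.l.o.g. disjoint) alphabets, the bipartite representation $\mathcal B_{X,Y}$ is the bipartite graph on $\mathcal X\cup\mathcal Y$ with an edge between $x$ and $y$ iff $p_{X,Y}(x,y)>0$. The Gács–Körner common information $K_{X,Y}$ is the random variable equal to the index of the connected component of $\mathcal B_{X,Y}$ containing $(X,Y)$; equivalently, it maximizes $H(U)$ over all $U$ with $H(U\mid X)=H(U\mid Y)=0$. *)

theory Defs
  imports "HOL-Probability.Probability_Mass_Function"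
begin

definition entropy_pmf :: "'a pmf \<Rightarrow> real" where
  "entropy_pmf p = - (\<Sum>a\<in>set_pmf p. pmf p a * log 2 (pmf p a))"

definition H :: "'o pmf \<Rightarrow> ('o \<Rightarrow> 'a) \<Rightarrow> real" where
  "H P X = entropy_pmf (map_pmf X P)"

definition cond_H :: "'o pmf \<Rightarrow> ('o \<Rightarrow> 'a) \<Rightarrow> ('o \<Rightarrow> 'b) \<Rightarrow> real" where
  "cond_H P X Y = H P (\<lambda>\<omega>. (X \<omega>, Y \<omega>)) - H P Y"

definition markov_chain :: "'o pmf \<Rightarrow> ('o \<Rightarrow> 'a) \<Rightarrow> ('o \<Rightarrow> 'b) \<Rightarrow> ('o \<Rightarrow> 'c) \<Rightarrow> bool" where
  "markov_chain P X Y Z \<longleftrightarrow>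
     (\<forall>x y z. pmf (map_pmf (\<lambda>\<omega>. (X \<omega>, Y \<omega>, Z \<omega>)) P) (x, y, z) * pmf (map_pmf Y P) y
            = pmf (map_pmf (\<lambda>\<omega>. (X \<omega>, Y \<omega>)) P) (x, y) * pmf (map_pmf (\<lambda>\<omega>. (Y \<omega>, Z \<omega>)) P) (y, z))"

definition bip_edges :: "('a \<times> 'b) pmf \<Rightarrow> ('a + 'b) rel" where
  "bip_edges q = {(Inl x, Inr y) | x y. pmf q (x, y) > 0} \<union> {(Inr y, Inl x) | x y. pmf q (x, y) > 0}"

definition bip_component :: "('a \<times> 'b) pmf \<Rightarrow> 'a \<Rightarrow> ('a + 'b) set" where
  "bip_component q x = (bip_edges q)\<^sup>* `` {Inl x}"

text \<open>The component is used as its own index.\<close>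
definition GK :: "'o pmf \<Rightarrow> ('o \<Rightarrow> 'a) \<Rightarrow> ('o \<Rightarrow> 'b) \<Rightarrow> 'o \<Rightarrow> ('a + 'b) set" where
  "GK P X Y = (\<lambda>\<omega>. bip_component (map_pmf (\<lambda>\<omega>'. (X \<omega>', Y \<omega>')) P) (X \<omega>))"

end

theory Submission imports Defs begin

text \<open>A Markov chain \<open>X \<leftrightarrow> Y \<leftrightarrow> Z\<close> makes two \<open>X\<close>-values with a common neighbour \<open>y\<close> in the
  bipartite graph of \<open>(X,Y)\<close> share every \<open>Z\<close>-neighbour of \<open>y\<close>, hence they lie in one component
  of the bipartite graph of \<open>(X,Z)\<close>. So each component of \<open>(X,Y)\<close> sits inside one component of
  \<open>(X,Z)\<close>, i.e. \<open>K\<^sub>2\<close> is a function of \<open>K\<^sub>1\<close>, and a function of a random variable has zero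
  conditional entropy given it and no larger entropy.\<close>

lemma pmf_map_finite:
  assumes "finite (set_pmf p)"
  shows "pmf (map_pmf g p) b = (\<Sum>a\<in>{a\<in>set_pmf p. g a = b}. pmf p a)"
proof -
  have "pmf (map_pmf g p) b = measure p (g -` {b} \<inter> set_pmf p)"
    by (simp add: pmf_map measure_Int_set_pmf)
  also have "\<dots> = (\<Sum>a\<in>{a\<in>set_pmf p. g a = b}. pmf p a)"
    using assms by (subst measure_measure_pmf_finite) (auto intro: sum.cong)
  finally show ?thesis .
qed

lemma entropy_pmf_map:
  assumes fin: "finite (set_pmf p)"
  shows "entropy_pmf (map_pmf g p) = - (\<Sum>a\<in>set_pmf p. pmf p a * log 2 (pmf (map_pmf g p) (g a)))"
proof -
  let ?q = "pmf (map_pmf g p)"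
  have "(\<Sum>b\<in>set_pmf (map_pmf g p). ?q b * log 2 (?q b))
      = (\<Sum>b\<in>g ` set_pmf p. \<Sum>a\<in>{a\<in>set_pmf p. g a = b}. pmf p a * log 2 (?q (g a)))"
    using fin by (intro sum.cong) (auto simp: pmf_map_finite sum_distrib_right)
  also have "\<dots> = (\<Sum>a\<in>set_pmf p. pmf p a * log 2 (?q (g a)))"
    using sum.image_gen[OF fin, of "\<lambda>a. pmf p a * log 2 (?q (g a))" g] by simp
  finally show ?thesis unfolding entropy_pmf_def by simp
qed

lemma entropy_pmf_map_le:
  assumes fin: "finite (set_pmf p)"
  shows "entropy_pmf (map_pmf g p) \<le> entropy_pmf p"
proof -
  have "log 2 (pmf p a) \<le> log 2 (pmf (map_pmf g p) (g a))" if a: "a \<in> set_pmf p" for a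
  proof -
    have "pmf p a \<le> pmf (map_pmf g p) (g a)"
      using fin a by (subst pmf_map_finite) (auto intro!: member_le_sum)
    with a show ?thesis by (simp add: pmf_positive)
  qed
  then have "(\<Sum>a\<in>set_pmf p. pmf p a * log 2 (pmf p a))
      \<le> (\<Sum>a\<in>set_pmf p. pmf p a * log 2 (pmf (map_pmf g p) (g a)))"
    by (intro sum_mono mult_left_mono) auto
  then show ?thesis
    unfolding entropy_pmf_map[OF fin] by (simp add: entropy_pmf_def)
qed

lemma entropy_pmf_map_inj:
  assumes "finite (set_pmf p)" and "inj_on g (set_pmf p)"
  shows "entropy_pmf (map_pmf g p) = entropy_pmf p"
  using assms entropy_pmf_map[of p g] unfolding entropy_pmf_def by (simp add: pmf_map_inj)

lemma determined_by_obtain: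
  assumes "\<And>w w'. w \<in> set_pmf P \<Longrightarrow> w' \<in> set_pmf P \<Longrightarrow> U w = U w' \<Longrightarrow> V w = V w'"
  obtains f where "\<And>w. w \<in> set_pmf P \<Longrightarrow> V w = f (U w)"
proof
  fix w assume w: "w \<in> set_pmf P"
  then have "\<exists>v. v \<in> set_pmf P \<and> U v = U w" by blast
  then have "(SOME v. v \<in> set_pmf P \<and> U v = U w) \<in> set_pmf P \<and> U (SOME v. v \<in> set_pmf P \<and> U v = U w) = U w"
    by (rule someI_ex)
  with w assms show "V w = V (SOME v. v \<in> set_pmf P \<and> U v = U w)" by metis
qed

lemma cond_H_eq_0_and_H_le_if_determined:
  assumes fin: "finite (U ` set_pmf P)"
    and det: "\<And>w w'. w \<in> set_pmf P \<Longrightarrow> w' \<in> set_pmf P \<Longrightarrow> U w = U w' \<Longrightarrow> V w = V w'"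
  shows "cond_H P V U = 0 \<and> H P V \<le> H P U"
proof -
  obtain f where f: "\<And>w. w \<in> set_pmf P \<Longrightarrow> V w = f (U w)"
    using determined_by_obtain det by blast
  have fin': "finite (set_pmf (map_pmf U P))" using fin by simp
  have map_V: "map_pmf V P = map_pmf f (map_pmf U P)"
    by (simp add: map_pmf_comp f cong: map_pmf_cong)
  have map_VU: "map_pmf (\<lambda>w. (V w, U w)) P = map_pmf (\<lambda>k. (f k, k)) (map_pmf U P)"
    by (simp add: map_pmf_comp f cong: map_pmf_cong)
  have "inj_on (\<lambda>k. (f k, k)) (set_pmf (map_pmf U P))" by (auto intro: inj_onI)
  then have "cond_H P V U = 0"
    unfolding cond_H_def H_def map_VU by (simp add: entropy_pmf_map_inj[OF fin'])
  moreover have "H P V \<le> H P U"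
    unfolding H_def map_V using entropy_pmf_map_le[OF fin'] .
  ultimately show ?thesis ..
qed

lemma sym_bip_edges: "sym (bip_edges q)"
  unfolding bip_edges_def sym_def by blast

lemma Image_rtrancl_eq_if_sym:
  assumes "sym E" and "(a, b) \<in> E\<^sup>*"
  shows "E\<^sup>* `` {a} = E\<^sup>* `` {b}"
proof -
  have "(b, a) \<in> E\<^sup>*" using assms sym_rtrancl by (metis symD)
  with assms(2) show ?thesis by (auto intro: rtrancl_trans)
qed

lemma rtrancl_invariant:
  assumes "(a, b) \<in> E\<^sup>*" and "\<And>u v. (u, v) \<in> E \<Longrightarrow> c u = c v"
  shows "c a = c b"
  using assms by (induction rule: rtrancl_induct) auto

lemma bip_component_eq_if_common_neighbour:
  assumes mc: "markov_chain P X Y Z"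
    and xy: "pmf (map_pmf (\<lambda>\<omega>. (X \<omega>, Y \<omega>)) P) (x, y) > 0"
    and x'y: "pmf (map_pmf (\<lambda>\<omega>. (X \<omega>, Y \<omega>)) P) (x', y) > 0"
  shows "bip_component (map_pmf (\<lambda>\<omega>. (X \<omega>, Z \<omega>)) P) x
       = bip_component (map_pmf (\<lambda>\<omega>. (X \<omega>, Z \<omega>)) P) x'"
proof -
  let ?E = "bip_edges (map_pmf (\<lambda>\<omega>. (X \<omega>, Z \<omega>)) P)"
  from xy obtain w where w: "w \<in> set_pmf P" "Y w = y" by (auto simp: pmf_positive_iff)
  define z where "z = Z w"
  have pY: "pmf (map_pmf Y P) y > 0" and pYZ: "pmf (map_pmf (\<lambda>\<omega>. (Y \<omega>, Z \<omega>)) P) (y, z) > 0"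
    using w by (auto simp: pmf_positive_iff z_def)
  have edge: "(Inl u, Inr z) \<in> ?E" "(Inr z, Inl u) \<in> ?E"
    if "pmf (map_pmf (\<lambda>\<omega>. (X \<omega>, Y \<omega>)) P) (u, y) > 0" for u
  proof -
    have "pmf (map_pmf (\<lambda>\<omega>. (X \<omega>, Y \<omega>, Z \<omega>)) P) (u, y, z) * pmf (map_pmf Y P) y > 0"
      using mc that pYZ unfolding markov_chain_def by simp
    with pY have "pmf (map_pmf (\<lambda>\<omega>. (X \<omega>, Y \<omega>, Z \<omega>)) P) (u, y, z) > 0"
      by (simp add: zero_less_mult_iff)
    then have "pmf (map_pmf (\<lambda>\<omega>. (X \<omega>, Z \<omega>)) P) (u, z) > 0"
      by (auto simp: pmf_positive_iff)
    then show "(Inl u, Inr z) \<in> ?E" "(Inr z, Inl u) \<in> ?E"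
      unfolding bip_edges_def by blast+
  qed
  have "(Inl x, Inl x') \<in> ?E\<^sup>*"
    using edge(1)[OF xy] edge(2)[OF x'y] by (meson converse_rtrancl_into_rtrancl r_into_rtrancl)
  then show ?thesis
    unfolding bip_component_def by (rule Image_rtrancl_eq_if_sym[OF sym_bip_edges])
qed

lemma GK_determined_by_GK_of_markov_chain:
  assumes mc: "markov_chain P X Y Z"
    and "GK P X Y w = GK P X Y w'"
  shows "GK P X Z w = GK P X Z w'"
proof -
  let ?qY = "map_pmf (\<lambda>\<omega>. (X \<omega>, Y \<omega>)) P" and ?qZ = "map_pmf (\<lambda>\<omega>. (X \<omega>, Z \<omega>)) P"
  \<comment> \<open>A \<open>Y\<close>-vertex is labelled by the \<open>(X,Z)\<close>-component of any of its \<open>X\<close>-neighbours.\<close>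
  define c where "c v = (case v of Inl x \<Rightarrow> bip_component ?qZ x
    | Inr y \<Rightarrow> bip_component ?qZ (SOME x. pmf ?qY (x, y) > 0))" for v
  have c_edge: "c (Inl x) = c (Inr y)" if xy: "pmf ?qY (x, y) > 0" for x y
  proof -
    have "pmf ?qY (SOME x. pmf ?qY (x, y) > 0, y) > 0" using xy by (rule someI)
    then show ?thesis
      unfolding c_def sum.case by (rule bip_component_eq_if_common_neighbour[OF mc xy])
  qed
  have "Inl (X w') \<in> GK P X Y w"
    unfolding assms(2) by (simp add: GK_def bip_component_def)
  then have "(Inl (X w), Inl (X w')) \<in> (bip_edges ?qY)\<^sup>*"
    by (simp add: GK_def bip_component_def)
  then have "c (Inl (X w)) = c (Inl (X w'))"
    by (rule rtrancl_invariant) (auto simp: bip_edges_def c_edge)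
  then show ?thesis by (simp add: c_def GK_def)
qed

theorem corollary1:
  fixes P :: "'o pmf" and X :: "'o \<Rightarrow> 'a" and Y :: "'o \<Rightarrow> 'b" and Z :: "'o \<Rightarrow> 'c"
  assumes "finite (X ` set_pmf P)" and "finite (Y ` set_pmf P)" and "finite (Z ` set_pmf P)"
    and "markov_chain P X Y Z"
  shows "cond_H P (GK P X Z) (GK P X Y) = 0 \<and> H P (GK P X Z) \<le> H P (GK P X Y)"
proof (rule cond_H_eq_0_and_H_le_if_determined)
  have "GK P X Y ` set_pmf P = bip_component (map_pmf (\<lambda>\<omega>. (X \<omega>, Y \<omega>)) P) ` X ` set_pmf P"
    unfolding GK_def by auto
  then show "finite (GK P X Y ` set_pmf P)" using assms(1) by simp
  show "\<And>w w'. GK P X Y w = GK P X Y w' \<Longrightarrow> GK P X Z w = GK P X Z w'"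
    using GK_determined_by_GK_of_markov_chain[OF assms(4)] .
qed

end
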